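(* Let $\mathcal M''=\bigcup_{K=1}^{\min(M,N)}\mathcal F_K^{\mathrm{an}}\times \mathcal Q_K^{\mathrm{in}}$. Then $\mathcal M''$ is identifiable: for all $(F^1,Q^1),(F^2,Q^2)\in\mathcal M''$, $F^1Q^1=F^2Q^2$ implies $(F^1,Q^1)\sim(F^2,Q^2)$.
   Context: Fix positive integers $M$ and $N$. For a positive integer $K$, $\mathcal F_K$ is the set of real $M\times K$ matrices with all entries in $[0,1]$, and $\mathcal Q_K$ is the set of real $K\times N$ matrices with entries in $[0,1]$ each of whose columns sums to $1$. $\mathcal F_K^{\mathrm{an}}$ is the set of $F\in\mathcal F_K$ such that for every $k\in\{1,\dots,K\}$ there is a row $s$ with $F_{sk}>0$ and $F_{s\ell}=0$ for all $\ell\neq k$. $\mathcal Q_K^{\mathrm{in}}$ is the set of $Q\in\mathcal Q_K$ whose rows are linearly independent. $(F^1,Q^1)\sim(F^2,Q^2)$ means $F^1,F^2$ have the same number $K$ of columns and there is a permutation $\pi$ of $\{1,\dots,K\}$ with $F^2_{sk}=F^1_{s\pi(k)}$ and $Q^2_{ki}=Q^1_{\pi(k)i}$ for all $s,k,i$. A set $\mathcal M\subseteq\bigcup_{K\ge1}\mathcal F_K\times\mathcal Q_K$ is identifiable if for all $(F^1,Q^1),(F^2,Q^2)\in\mathcal M$, $F^1Q^1=F^2Q^2$ implies $(F^1,Q^1)\sim(F^2,Q^2)$. *)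

theory Defs
  imports "Jordan_Normal_Form.Matrix" "HOL-Combinatorics.Permutations"
begin

definition F_set :: "nat \<Rightarrow> nat \<Rightarrow> real mat set" where
  "F_set M K = {F. F \<in> carrier_mat M K \<and>
      (\<forall>s<M. \<forall>k<K. 0 \<le> F $$ (s,k) \<and> F $$ (s,k) \<le> 1)}"

definition Q_set :: "nat \<Rightarrow> nat \<Rightarrow> real mat set" where
  "Q_set K N = {Q. Q \<in> carrier_mat K N \<and>
      (\<forall>k<K. \<forall>i<N. 0 \<le> Q $$ (k,i) \<and> Q $$ (k,i) \<le> 1) \<and>
      (\<forall>i<N. (\<Sum>k<K. Q $$ (k,i)) = 1)}"

definition F_an_set :: "nat \<Rightarrow> nat \<Rightarrow> real mat set" where
  "F_an_set M K = {F. F \<in> F_set M K \<and>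
      (\<forall>k<K. \<exists>s<M. F $$ (s,k) > 0 \<and> (\<forall>l<K. l \<noteq> k \<longrightarrow> F $$ (s,l) = 0))}"

definition rows_lin_indep :: "nat \<Rightarrow> nat \<Rightarrow> real mat \<Rightarrow> bool" where
  "rows_lin_indep K N Q \<longleftrightarrow>
     (\<forall>c :: nat \<Rightarrow> real. (\<forall>i<N. (\<Sum>k<K. c k * Q $$ (k,i)) = 0) \<longrightarrow> (\<forall>k<K. c k = 0))"

definition Q_in_set :: "nat \<Rightarrow> nat \<Rightarrow> real mat set" where
  "Q_in_set K N = {Q. Q \<in> Q_set K N \<and> rows_lin_indep K N Q}"

definition M2 :: "nat \<Rightarrow> nat \<Rightarrow> (real mat \<times> real mat) set" where
  "M2 M N = (\<Union>K\<in>{1..min M N}. F_an_set M K \<times> Q_in_set K N)"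

definition perm_equiv :: "real mat \<times> real mat \<Rightarrow> real mat \<times> real mat \<Rightarrow> bool" where
  "perm_equiv p1 p2 \<longleftrightarrow> (case p1 of (F1, Q1) \<Rightarrow> case p2 of (F2, Q2) \<Rightarrow>
     dim_col F1 = dim_col F2 \<and> dim_row F1 = dim_row F2 \<and>
     dim_row Q1 = dim_row Q2 \<and> dim_col Q1 = dim_col Q2 \<and>
     (\<exists>\<pi>. \<pi> permutes {..<dim_col F1} \<and>
        (\<forall>s<dim_row F1. \<forall>k<dim_col F1. F2 $$ (s,k) = F1 $$ (s, \<pi> k)) \<and>
        (\<forall>k<dim_row Q1. \<forall>i<dim_col Q1. Q2 $$ (k,i) = Q1 $$ (\<pi> k, i))))"

definition identifiable :: "(real mat \<times> real mat) set \<Rightarrow> bool" where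
  "identifiable S \<longleftrightarrow>
     (\<forall>F1 Q1 F2 Q2. (F1, Q1) \<in> S \<longrightarrow> (F2, Q2) \<in> S \<longrightarrow>
        F1 * Q1 = F2 * Q2 \<longrightarrow> perm_equiv (F1, Q1) (F2, Q2))"

end

theory Submission
  imports Defs
begin

(* Rows of F Q are nonnegative combinations of rows of Q, and through an anchor row of F each
   row of Q is a positive multiple of a row of F Q. So for two anchored factorizations of the
   same matrix, the rows of Q1 and of Q2 are nonnegative combinations of each other. Composing
   the two and comparing coefficients against the independent rows of Q2, nonnegativity forces
   some row of Q1 to be a multiple of any given row of Q2 (the rows of Q span the extreme rays of
   the cone generated by the rows of F Q). Independence makes this row correspondence injective
   both ways, hence a bijection; unit column sums make all multiples 1, and independence of the
   rows of Q then determines F. *)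

lemma index_mult_mat_sum:
  assumes "F \<in> carrier_mat M K" "Q \<in> carrier_mat K N" "s < M" "i < N"
  shows "(F * Q) $$ (s,i) = (\<Sum>j<K. F $$ (s,j) * Q $$ (j,i))"
  using assms by (simp add: index_mult_mat scalar_prod_def lessThan_atLeast0)

lemma sum_mult_single_support:
  fixes g :: "nat \<Rightarrow> 'a::semiring_0"
  assumes "k < K" "\<forall>l<K. l \<noteq> k \<longrightarrow> f l = 0"
  shows "(\<Sum>l<K. f l * g l) = f k * g k"
  using assms by (subst sum.remove[of _ k]) (auto intro!: sum.neutral)

lemma F_an_set_carrier: "F \<in> F_an_set M K \<Longrightarrow> F \<in> carrier_mat M K"
  by (simp add: F_an_set_def F_set_def)

lemma Q_in_setD:
  assumes "Q \<in> Q_in_set K N"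
  shows "Q \<in> carrier_mat K N" "rows_lin_indep K N Q" "\<forall>i<N. (\<Sum>k<K. Q $$ (k,i)) = 1"
  using assms by (simp_all add: Q_in_set_def Q_set_def)

lemma rows_lin_indepD:
  assumes "rows_lin_indep K N Q" "\<forall>i<N. (\<Sum>k<K. c k * Q $$ (k,i)) = 0" "k < K"
  shows "c k = 0"
  using assms unfolding rows_lin_indep_def by blast

lemma rows_lin_indep_coeffs_unique:
  assumes "rows_lin_indep K N Q"
    and "\<forall>i<N. (\<Sum>k<K. c k * Q $$ (k,i)) = (\<Sum>k<K. d k * Q $$ (k,i))" and "k < K"
  shows "c k = d k"
proof -
  have "\<forall>i<N. (\<Sum>k<K. (c k - d k) * Q $$ (k,i)) = 0"
    using assms(2) by (simp add: left_diff_distrib sum_subtractf)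
  from rows_lin_indepD[OF assms(1) this assms(3)] show ?thesis by simp
qed

lemma rows_lin_indep_row_nonzero:
  assumes "rows_lin_indep K N Q" "k < K"
  shows "\<exists>i<N. Q $$ (k,i) \<noteq> 0"
proof (rule ccontr)
  assume "\<not> ?thesis"
  then have "\<forall>i<N. (\<Sum>l<K. of_bool (l = k) * Q $$ (l,i)) = 0"
    using assms(2) by simp
  from rows_lin_indepD[OF assms(1) this assms(2)] show False by simp
qed

lemma anchored_factor_row_nonneg_comb:
  assumes F: "F \<in> F_an_set M K" and Q: "Q \<in> carrier_mat K N"
    and G: "G \<in> F_set M L" and R: "R \<in> carrier_mat L N"
    and eq: "F * Q = G * R" and k: "k < K"
  shows "\<exists>h. (\<forall>l<L. 0 \<le> h l) \<and> (\<forall>i<N. Q $$ (k,i) = (\<Sum>l<L. h l * R $$ (l,i)))"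
proof -
  obtain s where s: "s < M" "F $$ (s,k) > 0" "\<forall>l<K. l \<noteq> k \<longrightarrow> F $$ (s,l) = 0"
    using F k by (auto simp: F_an_set_def)
  have G_carrier: "G \<in> carrier_mat M L" and G_nonneg: "\<forall>l<L. 0 \<le> G $$ (s,l)"
    using G s(1) by (auto simp: F_set_def)
  have "Q $$ (k,i) = (\<Sum>l<L. (G $$ (s,l) / F $$ (s,k)) * R $$ (l,i))" if i: "i < N" for i
  proof -
    have "F $$ (s,k) * Q $$ (k,i) = (F * Q) $$ (s,i)"
      using index_mult_mat_sum[OF F_an_set_carrier[OF F] Q s(1) i]
        sum_mult_single_support[OF k s(3)] by simp
    also have "\<dots> = (\<Sum>l<L. G $$ (s,l) * R $$ (l,i))"
      using index_mult_mat_sum[OF G_carrier R s(1) i] eq by simp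
    finally show ?thesis
      using s(2) by (simp add: sum_divide_distrib[symmetric] field_simps)
  qed
  then show ?thesis
    using G_nonneg s(2) by (intro exI[of _ "\<lambda>l. G $$ (s,l) / F $$ (s,k)"]) auto
qed

lemma nonneg_comb_row_proportional:
  fixes Q R :: "real mat"
  assumes R: "rows_lin_indep L N R" and k: "k < L"
    and h_nonneg: "\<forall>j<K. \<forall>l<L. 0 \<le> h j l"
    and Q_comb: "\<forall>j<K. \<forall>i<N. Q $$ (j,i) = (\<Sum>l<L. h j l * R $$ (l,i))"
    and w_nonneg: "\<forall>j<K. 0 \<le> w j"
    and R_comb: "\<forall>i<N. R $$ (k,i) = (\<Sum>j<K. w j * Q $$ (j,i))"
  shows "\<exists>j<K. \<exists>c. \<forall>i<N. Q $$ (j,i) = c * R $$ (k,i)"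
proof -
  define g where "g l = (\<Sum>j<K. w j * h j l)" for l
  have coeffs: "\<forall>i<N. (\<Sum>l<L. g l * R $$ (l,i)) = (\<Sum>l<L. of_bool (l = k) * R $$ (l,i))"
  proof (intro allI impI)
    fix i assume i: "i < N"
    have "(\<Sum>l<L. g l * R $$ (l,i)) = (\<Sum>j<K. w j * Q $$ (j,i))"
      using Q_comb i
      by (simp add: g_def sum_distrib_left sum_distrib_right mult.assoc sum.swap[of _ "{..<L}"])
    then show "(\<Sum>l<L. g l * R $$ (l,i)) = (\<Sum>l<L. of_bool (l = k) * R $$ (l,i))"
      using R_comb i k by simp
  qed
  have g: "g l = of_bool (l = k)" if "l < L" for l
    using rows_lin_indep_coeffs_unique[OF R coeffs that] .
  have "g k \<noteq> 0"
    using g[OF k] by simp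
  then obtain j where j: "j < K" "w j * h j k \<noteq> 0"
    unfolding g_def by (meson lessThan_iff sum.neutral)
  have h_zero: "h j l = 0" if l: "l < L" "l \<noteq> k" for l
  proof -
    have "\<forall>j'\<in>{..<K}. w j' * h j' l = 0"
      using g[OF l(1)] l(2) h_nonneg w_nonneg l(1)
      by (subst sum_nonneg_eq_0_iff[symmetric]) (auto simp: g_def)
    then show ?thesis using j by auto
  qed
  have "\<forall>i<N. Q $$ (j,i) = h j k * R $$ (k,i)"
    using Q_comb j(1) sum_mult_single_support[OF k, of "h j"] h_zero by simp
  then show ?thesis using j(1) by blast
qed

lemma anchored_factorization_row_map:
  assumes F1: "F1 \<in> F_an_set M K1" and Q1: "Q1 \<in> carrier_mat K1 N"
    and F2: "F2 \<in> F_an_set M K2" and Q2: "Q2 \<in> carrier_mat K2 N"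
    and li: "rows_lin_indep K2 N Q2" and eq: "F1 * Q1 = F2 * Q2"
  shows "\<exists>\<sigma> c. \<forall>k<K2. \<sigma> k < K1 \<and> (\<forall>i<N. Q1 $$ (\<sigma> k,i) = c k * Q2 $$ (k,i))"
proof -
  have F_set: "F1 \<in> F_set M K1" "F2 \<in> F_set M K2"
    using F1 F2 by (simp_all add: F_an_set_def)
  have "\<forall>j<K1. \<exists>h. (\<forall>l<K2. 0 \<le> h l) \<and> (\<forall>i<N. Q1 $$ (j,i) = (\<Sum>l<K2. h l * Q2 $$ (l,i)))"
    using anchored_factor_row_nonneg_comb[OF F1 Q1 F_set(2) Q2 eq] by blast
  then obtain h where h:
    "\<forall>j<K1. (\<forall>l<K2. 0 \<le> h j l) \<and> (\<forall>i<N. Q1 $$ (j,i) = (\<Sum>l<K2. h j l * Q2 $$ (l,i)))"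
    by metis
  have "\<exists>j<K1. \<exists>c. \<forall>i<N. Q1 $$ (j,i) = c * Q2 $$ (k,i)" if k: "k < K2" for k
  proof -
    obtain w where w: "\<forall>j<K1. 0 \<le> w j" "\<forall>i<N. Q2 $$ (k,i) = (\<Sum>j<K1. w j * Q1 $$ (j,i))"
      using anchored_factor_row_nonneg_comb[OF F2 Q2 F_set(1) Q1 eq[symmetric] k] by blast
    show ?thesis
      by (rule nonneg_comb_row_proportional[where h = h, OF li k _ _ w]) (use h in auto)
  qed
  then show ?thesis by metis
qed

lemma proportional_row_map_inj:
  assumes li1: "rows_lin_indep K1 N Q1" and li2: "rows_lin_indep K2 N Q2"
    and \<sigma>: "\<forall>k<K2. \<sigma> k < K1 \<and> (\<forall>i<N. Q1 $$ (\<sigma> k,i) = c k * Q2 $$ (k,i))"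
  shows "inj_on \<sigma> {..<K2}"
proof (rule inj_onI, rule ccontr)
  fix k k' assume k: "k \<in> {..<K2}" "k' \<in> {..<K2}" "\<sigma> k = \<sigma> k'" "k \<noteq> k'"
  have "\<forall>i<N. (\<Sum>l<K2. (of_bool (l = k) * c l) * Q2 $$ (l,i))
            = (\<Sum>l<K2. (of_bool (l = k') * c l) * Q2 $$ (l,i))"
    using \<sigma> k by (simp add: mult.assoc) metis
  from rows_lin_indep_coeffs_unique[OF li2 this, of k] have "c k = 0"
    using k by simp
  then have "\<forall>i<N. Q1 $$ (\<sigma> k,i) = 0"
    using \<sigma> k(1) by simp
  then show False
    using rows_lin_indep_row_nonzero[OF li1, of "\<sigma> k"] \<sigma> k(1) by auto
qed

lemma anchored_factorizations_row_bij:
  assumes F1: "F1 \<in> F_an_set M K1" and Q1: "Q1 \<in> carrier_mat K1 N" "rows_lin_indep K1 N Q1"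
    and F2: "F2 \<in> F_an_set M K2" and Q2: "Q2 \<in> carrier_mat K2 N" "rows_lin_indep K2 N Q2"
    and eq: "F1 * Q1 = F2 * Q2"
  obtains \<sigma> c where "K1 = K2" "bij_betw \<sigma> {..<K2} {..<K2}"
    "\<forall>k<K2. \<forall>i<N. Q1 $$ (\<sigma> k,i) = c k * Q2 $$ (k,i)"
proof -
  obtain \<sigma> c where \<sigma>: "\<forall>k<K2. \<sigma> k < K1 \<and> (\<forall>i<N. Q1 $$ (\<sigma> k,i) = c k * Q2 $$ (k,i))"
    using anchored_factorization_row_map[OF F1 Q1(1) F2 Q2 eq] by blast
  obtain \<tau> d where \<tau>: "\<forall>k<K1. \<tau> k < K2 \<and> (\<forall>i<N. Q2 $$ (\<tau> k,i) = d k * Q1 $$ (k,i))"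
    using anchored_factorization_row_map[OF F2 Q2(1) F1 Q1 eq[symmetric]] by blast
  have inj: "inj_on \<sigma> {..<K2}"
    using proportional_row_map_inj[OF Q1(2) Q2(2) \<sigma>] .
  have "K2 \<le> K1"
    using card_inj_on_le[OF inj, of "{..<K1}"] \<sigma> by auto
  moreover have "K1 \<le> K2"
    using card_inj_on_le[OF proportional_row_map_inj[OF Q2(2) Q1(2) \<tau>], of "{..<K2}"] \<tau> by auto
  ultimately have K: "K1 = K2" by simp
  then have "\<sigma> ` {..<K2} = {..<K2}"
    using endo_inj_surj[OF _ _ inj] \<sigma> by auto
  then have "bij_betw \<sigma> {..<K2} {..<K2}"
    using inj by (simp add: bij_betw_def)
  then show ?thesis
    using that[OF K] \<sigma> by blast
qed

lemma stochastic_proportional_rows_scale_one: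
  assumes li: "rows_lin_indep K N Q2" and bij: "bij_betw \<sigma> {..<K} {..<K}"
    and proportional: "\<forall>k<K. \<forall>i<N. Q1 $$ (\<sigma> k,i) = c k * Q2 $$ (k,i)"
    and sum1: "\<forall>i<N. (\<Sum>k<K. Q1 $$ (k,i)) = 1" and sum2: "\<forall>i<N. (\<Sum>k<K. Q2 $$ (k,i)) = 1"
    and k: "k < K"
  shows "c k = 1"
proof -
  have "\<forall>i<N. (\<Sum>l<K. c l * Q2 $$ (l,i)) = (\<Sum>l<K. 1 * Q2 $$ (l,i))"
  proof (intro allI impI)
    fix i assume i: "i < N"
    have "(\<Sum>l<K. c l * Q2 $$ (l,i)) = (\<Sum>l<K. Q1 $$ (\<sigma> l,i))"
      using proportional i by simp
    also have "\<dots> = (\<Sum>l<K. Q1 $$ (l,i))"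
      using sum.reindex_bij_betw[OF bij, of "\<lambda>l. Q1 $$ (l,i)"] .
    finally show "(\<Sum>l<K. c l * Q2 $$ (l,i)) = (\<Sum>l<K. 1 * Q2 $$ (l,i))"
      using sum1 sum2 i by simp
  qed
  from rows_lin_indep_coeffs_unique[OF li this k] show ?thesis .
qed

lemma factorization_left_factor_permuted:
  assumes F1: "F1 \<in> carrier_mat M K" and Q1: "Q1 \<in> carrier_mat K N"
    and F2: "F2 \<in> carrier_mat M K" and Q2: "Q2 \<in> carrier_mat K N"
    and eq: "F1 * Q1 = F2 * Q2" and li: "rows_lin_indep K N Q2"
    and bij: "bij_betw \<sigma> {..<K} {..<K}" and Q: "\<forall>k<K. \<forall>i<N. Q1 $$ (\<sigma> k,i) = Q2 $$ (k,i)"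
    and s: "s < M" and k: "k < K"
  shows "F2 $$ (s,k) = F1 $$ (s,\<sigma> k)"
proof -
  have "\<forall>i<N. (\<Sum>l<K. F2 $$ (s,l) * Q2 $$ (l,i)) = (\<Sum>l<K. F1 $$ (s,\<sigma> l) * Q2 $$ (l,i))"
  proof (intro allI impI)
    fix i assume i: "i < N"
    have "(\<Sum>l<K. F2 $$ (s,l) * Q2 $$ (l,i)) = (\<Sum>l<K. F1 $$ (s,l) * Q1 $$ (l,i))"
      using index_mult_mat_sum[OF F1 Q1 s i] index_mult_mat_sum[OF F2 Q2 s i] eq by simp
    also have "\<dots> = (\<Sum>l<K. F1 $$ (s,\<sigma> l) * Q1 $$ (\<sigma> l,i))"
      using sum.reindex_bij_betw[OF bij, of "\<lambda>l. F1 $$ (s,l) * Q1 $$ (l,i)"] by simp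
    also have "\<dots> = (\<Sum>l<K. F1 $$ (s,\<sigma> l) * Q2 $$ (l,i))"
      using Q i by simp
    finally show "(\<Sum>l<K. F2 $$ (s,l) * Q2 $$ (l,i)) = (\<Sum>l<K. F1 $$ (s,\<sigma> l) * Q2 $$ (l,i))" .
  qed
  from rows_lin_indep_coeffs_unique[OF li this k] show ?thesis .
qed

lemma perm_equivI:
  assumes "F1 \<in> carrier_mat M K" "Q1 \<in> carrier_mat K N"
    and "F2 \<in> carrier_mat M K" "Q2 \<in> carrier_mat K N"
    and bij: "bij_betw \<sigma> {..<K} {..<K}"
    and "\<forall>s<M. \<forall>k<K. F2 $$ (s,k) = F1 $$ (s,\<sigma> k)"
    and "\<forall>k<K. \<forall>i<N. Q2 $$ (k,i) = Q1 $$ (\<sigma> k,i)"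
  shows "perm_equiv (F1, Q1) (F2, Q2)"
proof -
  define \<pi> where "\<pi> k = (if k < K then \<sigma> k else k)" for k
  have "bij_betw \<pi> {..<K} {..<K}"
    using bij by (rule bij_betw_cong[THEN iffD1, rotated]) (simp add: \<pi>_def)
  then have "\<pi> permutes {..<K}"
    by (rule bij_imp_permutes) (simp add: \<pi>_def)
  then show ?thesis
    using assms unfolding perm_equiv_def by (auto intro!: exI[of _ \<pi>] simp: \<pi>_def)
qed

theorem mainTheorem3:
  fixes M N :: nat
  assumes "0 < M" and "0 < N"
  shows "identifiable (M2 M N)"
  unfolding identifiable_def
proof (intro allI impI)
  fix F1 Q1 F2 Q2
  assume "(F1, Q1) \<in> M2 M N" "(F2, Q2) \<in> M2 M N" and eq: "F1 * Q1 = F2 * Q2"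
  then obtain K1 K2 where F1: "F1 \<in> F_an_set M K1" and Q1: "Q1 \<in> Q_in_set K1 N"
    and F2: "F2 \<in> F_an_set M K2" and Q2: "Q2 \<in> Q_in_set K2 N"
    by (auto simp: M2_def)
  note Q1D = Q_in_setD[OF Q1] and Q2D = Q_in_setD[OF Q2]
  obtain \<sigma> c where K: "K1 = K2" and bij: "bij_betw \<sigma> {..<K2} {..<K2}"
    and proportional: "\<forall>k<K2. \<forall>i<N. Q1 $$ (\<sigma> k,i) = c k * Q2 $$ (k,i)"
    using anchored_factorizations_row_bij[OF F1 Q1D(1,2) F2 Q2D(1,2) eq] by blast
  have "\<forall>k<K2. c k = 1"
    using stochastic_proportional_rows_scale_one[OF Q2D(2) bij proportional] Q1D(3) Q2D(3) K
    by simp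
  then have Q: "\<forall>k<K2. \<forall>i<N. Q1 $$ (\<sigma> k,i) = Q2 $$ (k,i)"
    using proportional by simp
  have carrier: "F1 \<in> carrier_mat M K2" "Q1 \<in> carrier_mat K2 N"
    "F2 \<in> carrier_mat M K2" "Q2 \<in> carrier_mat K2 N"
    using F_an_set_carrier[OF F1] F_an_set_carrier[OF F2] Q1D(1) Q2D(1) K by simp_all
  have "\<forall>s<M. \<forall>k<K2. F2 $$ (s,k) = F1 $$ (s,\<sigma> k)"
    using factorization_left_factor_permuted[OF carrier eq Q2D(2) bij Q] by blast
  then show "perm_equiv (F1, Q1) (F2, Q2)"
    using perm_equivI[OF carrier bij] Q by simp
qed

end
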